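(* Let $d\ge 1$ and let $f$ be a probability density on $\mathbb{R}^d$ with compact support and a unique global mode $x_0$ (i.e. $\{x_0\}=\arg\max_{x} f(x)$), such that for some constants $0<c_0<C_0$, $h_0>0$ and $\beta>0$: $$f(x_0)-C_0\|x-x_0\|^\beta \le f(x)\le f(x_0)-c_0\|x-x_0\|^\beta \quad\text{whenever } \|x-x_0\|\le h_0,$$ $$f(x)\le f(x_0)-c_0h_0^\beta \quad\text{whenever } \|x-x_0\|\ge h_0.$$ Let $X_1,\dots,X_n$ be i.i.d. with density $f$, let $h>0$ be a bin size, and let $\hat x$ be the output of the Mono-scale Mode Hunting procedure (described in the context) applied to $X_1,\dots,X_n$ with bin size $h$. Then there is a constant $A>0$ depending only on the constants in the two displayed conditions (and on $f$, $d$) such that, for all $n$ and $h>0$, $\|\hat x-x_0\|\le Ah$ with probability at least $1-A\exp(-nh^{d+2\beta}/A)$.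
   Context: Throughout, $\|x\|=\max_i|x_i|$ denotes the sup-norm on $\mathbb{R}^d$. Mono-scale Mode Hunting with bin size $h$: for $k\in\mathbb{Z}^d$, the bin $k$ is the hypercube $[kh,(k+1)h)$ (coordinatewise), and its count is the number of sample points lying in it. For each $i$, let $k_i=\lfloor X_i/h\rfloor$ (coordinatewise floor), let $\hat k$ be a bin index $k_i$ with the largest count (maximizing over $i=1,\dots,n$), and return $\hat x:=\hat k h$. *)

theory Defs
  imports "HOL-Probability.Probability"
begin

definition bin_index :: "real \<Rightarrow> real^'d \<Rightarrow> int^'d" where
  "bin_index h x = (\<chi> i. \<lfloor>x $ i / h\<rfloor>)"

definition bin_count :: "real \<Rightarrow> nat \<Rightarrow> (nat \<Rightarrow> real^'d) \<Rightarrow> int^'d \<Rightarrow> nat" where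
  "bin_count h n X k = card {j \<in> {..<n}. bin_index h (X j) = k}"

definition bin_corner :: "real \<Rightarrow> int^'d \<Rightarrow> real^'d" where
  "bin_corner h k = (\<chi> i. real_of_int (k $ i) * h)"

text \<open>Admissible outputs of Mono-scale Mode Hunting: the points (k_i) h where k_i is a
  sample bin index with the largest count (any tie-breaking).\<close>
definition mode_hunting_outputs :: "real \<Rightarrow> nat \<Rightarrow> (nat \<Rightarrow> real^'d) \<Rightarrow> (real^'d) set" where
  "mode_hunting_outputs h n X =
     {bin_corner h (bin_index h (X i)) | i. i < n \<and>
        (\<forall>j<n. bin_count h n X (bin_index h (X j)) \<le> bin_count h n X (bin_index h (X i)))}"

end

theory Submission
  imports Defs "HOL-Real_Asymp.Real_Asymp"
begin

text \<open>Let \<open>k\<^sub>0\<close> be the bin containing the mode \<open>x0\<close>. A bin at lattice distance \<open>m \<ge> 2\<close>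
  from \<open>k\<^sub>0\<close> that meets the support of \<open>f\<close> lies at distance of order \<open>m h\<close> from \<open>x0\<close>, so its
  mass is at most \<open>(f x0 - c m\<^sup>\<beta> h\<^sup>\<beta>) h\<^sup>d\<close> for a constant \<open>c > 0\<close>, whereas \<open>k\<^sub>0\<close> has mass at
  least \<open>(f x0 - C0 h\<^sup>\<beta>) h\<^sup>d\<close>. Beyond a constant threshold for \<open>m\<close> the gap is of order
  \<open>m\<^sup>\<beta> h\<^sup>\<beta>\<^sup>+\<^sup>d\<close>, and a Chernoff bound for the difference of the two counts shows that the bin
  collects at least as many samples as \<open>k\<^sub>0\<close> with probability at most
  \<open>exp (- \<gamma> n h\<^sup>d\<^sup>+\<^sup>2\<^sup>\<beta> m\<^sup>2\<^sup>\<beta>)\<close> for a constant \<open>\<gamma> > 0\<close>. The output is within \<open>A h\<close> of \<open>x0\<close>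
  unless such a bin with \<open>m > A - 1\<close> beats \<open>k\<^sub>0\<close>, and the union bound over these bins is a
  convergent lattice sum.\<close>

section \<open>Comparing two cell counts\<close>

lemma exp_tilt_le:
  fixes p q :: real
  assumes "0 \<le> p" "p < q"
  shows "(exp ((q - p) / (4 * q)) - 1) * p + (exp (- ((q - p) / (4 * q))) - 1) * q
           \<le> - (q - p)\<^sup>2 / (8 * q)"
proof -
  define l where "l = (q - p) / (4 * q)"
  have q: "0 < q" using assms by linarith
  then have l: "0 < l" "l \<le> 1" using assms by (auto simp: l_def field_simps)
  have "exp l - 1 \<le> l + l\<^sup>2" using exp_bound[of l] l by simp
  moreover have "exp (- l) - 1 \<le> - l + l\<^sup>2"
  proof -
    have "exp (- l) = 1 / exp l" by (simp add: exp_minus field_simps)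
    also have "\<dots> \<le> 1 / (1 + l)"
      using l by (intro divide_left_mono) (auto simp: add_pos_pos exp_ge_add_one_self)
    also have "\<dots> \<le> 1 - l + l\<^sup>2" using l by (simp add: field_simps power2_eq_square)
    finally show ?thesis by simp
  qed
  ultimately have "(exp l - 1) * p + (exp (- l) - 1) * q \<le> (l + l\<^sup>2) * p + (- l + l\<^sup>2) * q"
    using assms q by (intro add_mono mult_right_mono) auto
  also have "\<dots> \<le> - l * (q - p) + 2 * l\<^sup>2 * q"
    using assms l by (simp add: algebra_simps power2_eq_square)
  also have "\<dots> = - (q - p)\<^sup>2 / (8 * q)"
    using q by (simp add: l_def field_simps power2_eq_square)
  finally show ?thesis unfolding l_def .
qed

lemma nn_integral_exp_tilt_le:
  fixes M :: "'a measure"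
  assumes "prob_space M" and [measurable]: "B \<in> sets M" "B0 \<in> sets M"
    and disjoint: "B \<inter> B0 = {}" and less: "measure M B < measure M B0"
  defines "l \<equiv> (measure M B0 - measure M B) / (4 * measure M B0)"
  shows "(\<integral>\<^sup>+ x. exp (l * (indicator B x - indicator B0 x)) \<partial>M)
           \<le> exp (- (measure M B0 - measure M B)\<^sup>2 / (8 * measure M B0))"
proof -
  interpret prob_space M by fact
  define p q where "p = measure M B" and "q = measure M B0"
  have pq: "0 \<le> p" "p < q" using less by (auto simp: p_def q_def)
  have tilt_eq: "exp (l * (indicator B x - indicator B0 x))
      = 1 + (exp l - 1) * indicator B x + (exp (- l) - 1) * indicator B0 x" for x
    using disjoint by (auto simp: indicator_def)
  have tilt_nonneg: "0 \<le> 1 + (exp l - 1) * indicator B x + (exp (- l) - 1) * indicator B0 x" for x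
    unfolding tilt_eq[symmetric] by simp
  define I where "I = 1 + (exp l - 1) * p + (exp (- l) - 1) * q"
  have "(\<integral>\<^sup>+ x. exp (l * (indicator B x - indicator B0 x)) \<partial>M)
      = (\<integral>\<^sup>+ x. ennreal (1 + (exp l - 1) * indicator B x + (exp (- l) - 1) * indicator B0 x) \<partial>M)"
    by (simp only: tilt_eq)
  also have "\<dots> = ennreal I"
    by (subst nn_integral_eq_integral)
      (auto simp: tilt_nonneg emeasure_eq_measure prob_space I_def p_def q_def)
  also have "I \<le> 1 - (q - p)\<^sup>2 / (8 * q)"
    using exp_tilt_le[OF pq] by (simp add: I_def l_def p_def q_def)
  also have "\<dots> \<le> exp (- (q - p)\<^sup>2 / (8 * q))"
    using exp_ge_add_one_self[of "- (q - p)\<^sup>2 / (8 * q)"] by simp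
  finally show ?thesis by (simp add: p_def q_def ennreal_leI)
qed

text \<open>The exponent is of order \<open>(q - p)\<^sup>2 / q\<close> in the masses \<open>p < q\<close> of the two cells, not
  \<open>(q - p)\<^sup>2\<close> as Hoeffding's inequality would give; for bins of volume \<open>h\<^sup>d\<close> this is the difference
  between the rates \<open>n h\<^sup>d\<^sup>+\<^sup>2\<^sup>\<beta>\<close> and \<open>n h\<^sup>2\<^sup>d\<^sup>+\<^sup>2\<^sup>\<beta>\<close>.\<close>
lemma prob_count_le_count:
  fixes M :: "'a measure" and n :: nat
  assumes "prob_space M" and [measurable]: "B \<in> sets M" "B0 \<in> sets M"
    and disjoint: "B \<inter> B0 = {}" and less: "measure M B < measure M B0"
  shows "measure (PiM {..<n} (\<lambda>_. M))
      {X \<in> space (PiM {..<n} (\<lambda>_. M)). card {j\<in>{..<n}. X j \<in> B0} \<le> card {j\<in>{..<n}. X j \<in> B}}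
    \<le> exp (- real n * (measure M B0 - measure M B)\<^sup>2 / (8 * measure M B0))"
proof -
  interpret M: prob_space M by fact
  interpret product_prob_space "\<lambda>_. M" by unfold_locales
  let ?P = "PiM {..<n} (\<lambda>_. M)"
  interpret sample: prob_space ?P by (intro prob_space_PiM M.prob_space_axioms)
  define p q where "p = measure M B" and "q = measure M B0"
  define l where "l = (q - p) / (4 * q)"
  have "0 \<le> p" "p < q" using less by (auto simp: p_def q_def)
  then have "0 < l" by (simp add: l_def)
  define g where "g x = exp (l * (indicator B x - indicator B0 x))" for x
  have count_eq: "(\<Sum>j<n. indicator C (X j)) = real (card {j\<in>{..<n}. X j \<in> C})" for C and X :: "nat \<Rightarrow> 'a"
    by (simp add: indicator_def Int_def)
  have prod_g: "(\<Prod>j<n. g (X j)) =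
      exp (l * (real (card {j\<in>{..<n}. X j \<in> B}) - real (card {j\<in>{..<n}. X j \<in> B0})))" for X
  proof -
    have "(\<Prod>j<n. g (X j)) = exp (\<Sum>j<n. l * (indicator B (X j) - indicator B0 (X j)))"
      by (simp add: g_def exp_sum)
    also have "\<dots> = exp (l * ((\<Sum>j<n. indicator B (X j)) - (\<Sum>j<n. indicator B0 (X j))))"
      by (simp add: sum_distrib_left[symmetric] sum_subtractf)
    finally show ?thesis by (simp only: count_eq)
  qed
  define T where "T = {X \<in> space ?P. 1 \<le> (\<Prod>j<n. g (X j))}"
  have T_sets: "T \<in> sets ?P" unfolding T_def g_def by measurable
  have "emeasure ?P T = (\<integral>\<^sup>+ X. indicator T X \<partial>?P)"
    using T_sets by simp
  also have "\<dots> \<le> (\<integral>\<^sup>+ X. (\<Prod>j<n. ennreal (g (X j))) \<partial>?P)"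
    by (intro nn_integral_mono) (auto simp: T_def indicator_def g_def prod_ennreal)
  also have "\<dots> = (\<integral>\<^sup>+ x. g x \<partial>M) ^ n"
    by (subst product_nn_integral_prod) (auto simp: g_def)
  also have "\<dots> \<le> ennreal (exp (- (q - p)\<^sup>2 / (8 * q))) ^ n"
    using nn_integral_exp_tilt_le[OF assms] by (intro power_mono) (simp_all add: g_def l_def p_def q_def)
  also have "\<dots> = ennreal (exp (- real n * (q - p)\<^sup>2 / (8 * q)))"
    by (simp add: ennreal_power exp_of_nat_mult[symmetric])
  finally have "measure ?P T \<le> exp (- real n * (q - p)\<^sup>2 / (8 * q))"
    by (simp add: sample.emeasure_eq_measure)
  moreover have "{X \<in> space ?P. card {j\<in>{..<n}. X j \<in> B0} \<le> card {j\<in>{..<n}. X j \<in> B}} \<subseteq> T"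
  proof
    fix X assume "X \<in> {X \<in> space ?P. card {j\<in>{..<n}. X j \<in> B0} \<le> card {j\<in>{..<n}. X j \<in> B}}"
    then have "X \<in> space ?P" "0 \<le> l * (real (card {j\<in>{..<n}. X j \<in> B}) - real (card {j\<in>{..<n}. X j \<in> B0}))"
      using \<open>0 < l\<close> by auto
    then show "X \<in> T" by (simp add: T_def prod_g)
  qed
  ultimately show ?thesis
    using sample.finite_measure_mono[OF _ T_sets] unfolding p_def q_def by (meson order_trans)
qed

lemma sets_count_le_count:
  fixes M :: "'a measure" and n :: nat
  assumes [measurable]: "B \<in> sets M" "B0 \<in> sets M"
  shows "{X \<in> space (PiM {..<n} (\<lambda>_. M)). card {j\<in>{..<n}. X j \<in> B0} \<le> card {j\<in>{..<n}. X j \<in> B}}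
           \<in> sets (PiM {..<n} (\<lambda>_. M))"
proof -
  have [measurable]: "(\<lambda>X. X j) \<in> PiM {..<n} (\<lambda>_. M) \<rightarrow>\<^sub>M M" if "j < n" for j
    using that by (auto intro: measurable_component_singleton)
  show ?thesis by measurable
qed

section \<open>Exponential sums over the integer lattice\<close>

definition lattice_dist :: "int^'d \<Rightarrow> int^'d \<Rightarrow> real" where
  "lattice_dist k l = infnorm (\<chi> i. real_of_int (k $ i - l $ i))"

lemma infnorm_le_iff: "infnorm (x :: real^'n) \<le> c \<longleftrightarrow> (\<forall>i. \<bar>x $ i\<bar> \<le> c)"
proof
  show "infnorm x \<le> c \<Longrightarrow> \<forall>i. \<bar>x $ i\<bar> \<le> c"
    using component_le_infnorm_cart[of x] by (meson order_trans)
  show "\<forall>i. \<bar>x $ i\<bar> \<le> c \<Longrightarrow> infnorm x \<le> c"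
    unfolding infnorm_cart by (auto intro!: cSup_least)
qed

lemma lattice_dist_le_iff: "lattice_dist k l \<le> c \<longleftrightarrow> (\<forall>i. \<bar>real_of_int (k $ i - l $ i)\<bar> \<le> c)"
  by (simp add: lattice_dist_def infnorm_le_iff)

lemma abs_le_lattice_dist: "\<bar>real_of_int (k $ i - l $ i)\<bar> \<le> lattice_dist k l"
  using lattice_dist_le_iff by blast

lemma lattice_dist_nonneg: "0 \<le> lattice_dist k l"
  by (simp add: lattice_dist_def infnorm_pos_le)

lemma lattice_dist_self: "lattice_dist k k = 0"
  by (simp add: lattice_dist_def vec_eq_iff infnorm_eq_0)

lemma lattice_ball_subset_PiE:
  "{k. lattice_dist k l \<le> r} \<subseteq> vec_lambda ` PiE UNIV (\<lambda>i. {l $ i - \<lceil>r\<rceil>..l $ i + \<lceil>r\<rceil>})"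
proof
  fix k assume "k \<in> {k. lattice_dist k l \<le> r}"
  then have dist: "\<bar>real_of_int (k $ i - l $ i)\<bar> \<le> r" for i
    using lattice_dist_le_iff by blast
  have "k $ i \<in> {l $ i - \<lceil>r\<rceil>..l $ i + \<lceil>r\<rceil>}" for i
  proof -
    have "\<bar>k $ i - l $ i\<bar> \<le> \<lceil>r\<rceil>"
      using dist[of i] by (simp add: le_ceiling_iff)
    then show ?thesis by (simp add: abs_le_iff)
  qed
  then show "k \<in> vec_lambda ` PiE UNIV (\<lambda>i. {l $ i - \<lceil>r\<rceil>..l $ i + \<lceil>r\<rceil>})"
    by (intro image_eqI[where x = "vec_nth k"]) auto
qed

lemma finite_lattice_ball: "finite {k. lattice_dist k l \<le> r}"
  by (rule finite_subset[OF lattice_ball_subset_PiE]) (intro finite_imageI finite_PiE; simp)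

lemma summable_exp_neg_powr:
  fixes c b :: real
  assumes "0 < c" "0 < b"
  shows "summable (\<lambda>m::nat. exp (- c * real m powr b))"
proof -
  have "((\<lambda>x::real. x\<^sup>2 * exp (- c * x powr b)) \<longlongrightarrow> 0) at_top"
    using assms by real_asymp
  then have "(\<lambda>m. real m ^ 2 * exp (- c * real m powr b)) \<longlonglongrightarrow> 0"
    using filterlim_compose[OF _ filterlim_real_sequentially] by (simp add: o_def)
  then have "eventually (\<lambda>m. real m ^ 2 * exp (- c * real m powr b) < 1) sequentially"
    by (rule order_tendstoD) simp
  then have "eventually (\<lambda>m. norm (exp (- c * real m powr b)) \<le> inverse (real m ^ 2)) sequentially"
    using eventually_gt_at_top[of "0::nat"]
    by eventually_elim (simp add: field_simps)
  then show ?thesis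
    by (rule summable_comparison_test_ev) (rule inverse_power_summable, simp)
qed

lemma sum_exp_neg_abs_powr_le:
  fixes c b :: real and L :: int
  assumes "0 < c" "0 < b"
  shows "(\<Sum>z\<in>{-L..L}. exp (- c * \<bar>real_of_int z\<bar> powr b)) \<le> 2 * (\<Sum>m. exp (- c * real m powr b))"
proof -
  let ?\<phi> = "\<lambda>m::nat. exp (- c * real m powr b)"
  let ?\<psi> = "\<lambda>z::int. exp (- c * \<bar>real_of_int z\<bar> powr b)"
  define N where "N = nat L"
  have "{-L..L} \<subseteq> int ` {..N} \<union> uminus ` int ` {..N}"
  proof
    fix z assume z: "z \<in> {-L..L}"
    show "z \<in> int ` {..N} \<union> uminus ` int ` {..N}"
    proof (cases "0 \<le> z")
      case True
      then have "z = int (nat z)" "nat z \<in> {..N}" using z by (auto simp: N_def)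
      then show ?thesis by blast
    next
      case False
      then have "z = - int (nat (- z))" "nat (- z) \<in> {..N}" using z by (auto simp: N_def)
      then show ?thesis by blast
    qed
  qed
  then have "(\<Sum>z\<in>{-L..L}. ?\<psi> z) \<le> (\<Sum>z\<in>int ` {..N} \<union> uminus ` int ` {..N}. ?\<psi> z)"
    by (intro sum_mono2) auto
  also have "\<dots> \<le> (\<Sum>z\<in>int ` {..N}. ?\<psi> z) + (\<Sum>z\<in>uminus ` int ` {..N}. ?\<psi> z)"
    using sum_nonneg[of "int ` {..N} \<inter> uminus ` int ` {..N}" ?\<psi>] by (simp add: sum_Un)
  also have "(\<Sum>z\<in>int ` {..N}. ?\<psi> z) = (\<Sum>m\<le>N. ?\<phi> m)"
    by (subst sum.reindex) auto
  also have "(\<Sum>z\<in>uminus ` int ` {..N}. ?\<psi> z) = (\<Sum>m\<le>N. ?\<phi> m)"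
    by (subst sum.reindex) (auto simp: sum.reindex)
  also have "(\<Sum>m\<le>N. ?\<phi> m) + (\<Sum>m\<le>N. ?\<phi> m) \<le> 2 * (\<Sum>m. ?\<phi> m)"
    using sum_le_suminf[OF summable_exp_neg_powr[OF assms], of "{..N}"] by simp
  finally show ?thesis .
qed

lemma sum_shift_interval_int:
  fixes \<psi> :: "int \<Rightarrow> real"
  shows "(\<Sum>z\<in>{a - L..a + L}. \<psi> (z - a)) = (\<Sum>z\<in>{-L..L}. \<psi> z)"
  by (rule sum.reindex_bij_witness[of _ "\<lambda>z. z + a" "\<lambda>z. z - a"]) auto

text \<open>The bound splits into one-dimensional sums because
  \<open>lattice_dist k l powr b \<ge> (\<Sum>i. \<bar>k\<^sub>i - l\<^sub>i\<bar> powr b) / d\<close>.\<close>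
lemma sum_exp_neg_lattice_dist_powr_le:
  fixes F :: "(int^'d) set" and l :: "int^'d" and c b :: real
  assumes "finite F" "0 < c" "0 < b"
  shows "(\<Sum>k\<in>F. exp (- c * lattice_dist k l powr b))
           \<le> (2 * (\<Sum>m. exp (- (c / CARD('d)) * real m powr b))) ^ CARD('d)"
proof -
  define c' where "c' = c / CARD('d)"
  have "0 < c'" using assms by (simp add: c'_def)
  let ?\<psi> = "\<lambda>z::int. exp (- c' * \<bar>real_of_int z\<bar> powr b)"
  have pointwise: "exp (- c * lattice_dist k l powr b) \<le> (\<Prod>i\<in>UNIV. ?\<psi> (k $ i - l $ i))" for k
  proof -
    have "(\<Sum>i\<in>UNIV. c' * \<bar>real_of_int (k $ i - l $ i)\<bar> powr b)
            \<le> (\<Sum>i\<in>(UNIV :: 'd set). c' * lattice_dist k l powr b)"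
      using \<open>0 < c'\<close> \<open>0 < b\<close> abs_le_lattice_dist by (intro sum_mono mult_left_mono powr_mono2) auto
    also have "\<dots> = c * lattice_dist k l powr b" by (simp add: c'_def)
    finally show ?thesis by (simp add: exp_sum[symmetric] sum_negf)
  qed
  define L where "L = \<lceil>\<Sum>k\<in>F. lattice_dist k l\<rceil>"
  define Z where "Z i = {l $ i - L..l $ i + L}" for i
  have "F \<subseteq> {k. lattice_dist k l \<le> (\<Sum>k\<in>F. lattice_dist k l)}"
    using assms(1) by (auto intro: member_le_sum lattice_dist_nonneg)
  then have F_sub: "F \<subseteq> vec_lambda ` PiE UNIV Z"
    using lattice_ball_subset_PiE unfolding Z_def L_def by blast
  have "(\<Sum>k\<in>F. exp (- c * lattice_dist k l powr b)) \<le> (\<Sum>k\<in>F. \<Prod>i\<in>UNIV. ?\<psi> (k $ i - l $ i))"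
    by (intro sum_mono pointwise)
  also have "\<dots> \<le> (\<Sum>k\<in>vec_lambda ` PiE UNIV Z. \<Prod>i\<in>UNIV. ?\<psi> (k $ i - l $ i))"
    using F_sub by (intro sum_mono2 finite_imageI finite_PiE) (auto simp: Z_def intro: prod_nonneg)
  also have "\<dots> = (\<Sum>g\<in>PiE UNIV Z. \<Prod>i\<in>UNIV. ?\<psi> (g i - l $ i))"
    by (subst sum.reindex) (auto simp: inj_on_def vec_lambda_inject)
  also have "\<dots> = (\<Prod>i\<in>UNIV. \<Sum>z\<in>Z i. ?\<psi> (z - l $ i))"
    by (rule prod_sum_PiE[symmetric]) (auto simp: Z_def)
  also have "\<dots> = (\<Prod>i\<in>(UNIV :: 'd set). \<Sum>z\<in>{-L..L}. ?\<psi> z)"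
    by (simp only: Z_def sum_shift_interval_int[of ?\<psi>])
  also have "\<dots> \<le> (\<Prod>i\<in>(UNIV :: 'd set). 2 * (\<Sum>m. exp (- c' * real m powr b)))"
    using sum_exp_neg_abs_powr_le[OF \<open>0 < c'\<close> \<open>0 < b\<close>] by (intro prod_mono) (auto intro: sum_nonneg)
  finally show ?thesis by (simp add: c'_def)
qed

lemma sum_exp_neg_scaled_lattice_dist_powr_le:
  fixes F :: "(int^'d) set" and l :: "int^'d" and c b t :: real
  assumes "finite F" "0 < c" "0 < b" "1 \<le> t" and far: "\<And>k. k \<in> F \<Longrightarrow> 1 \<le> lattice_dist k l"
  shows "(\<Sum>k\<in>F. exp (- c * t * lattice_dist k l powr b))
           \<le> exp (- c * t / 2) * (2 * (\<Sum>m. exp (- (c / 2 / CARD('d)) * real m powr b))) ^ CARD('d)"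
proof -
  have "exp (- c * t * lattice_dist k l powr b)
          \<le> exp (- c * t / 2) * exp (- (c / 2) * lattice_dist k l powr b)" if "k \<in> F" for k
  proof -
    define K where "K = lattice_dist k l powr b"
    have "1 \<le> K" unfolding K_def using far[OF that] \<open>0 < b\<close> by (intro ge_one_powr_ge_zero) auto
    moreover have "0 \<le> (t - 1) * (K - 1)" using \<open>1 \<le> K\<close> \<open>1 \<le> t\<close> by simp
    then have "t + K - 1 \<le> t * K" by (simp add: algebra_simps)
    ultimately have "t / 2 + K / 2 \<le> t * K" using \<open>1 \<le> t\<close> by linarith
    then have "- c * t * K \<le> - c * t / 2 + - (c / 2) * K"
      using \<open>0 < c\<close> mult_left_mono[of "t / 2 + K / 2" "t * K" c] by (simp add: algebra_simps)
    then show ?thesis unfolding K_def by (simp add: exp_add[symmetric])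
  qed
  then have "(\<Sum>k\<in>F. exp (- c * t * lattice_dist k l powr b))
      \<le> exp (- c * t / 2) * (\<Sum>k\<in>F. exp (- (c / 2) * lattice_dist k l powr b))"
    by (simp add: sum_distrib_left sum_mono)
  also have "\<dots> \<le> exp (- c * t / 2) * (2 * (\<Sum>m. exp (- (c / 2 / CARD('d)) * real m powr b))) ^ CARD('d)"
    using assms by (intro mult_left_mono sum_exp_neg_lattice_dist_powr_le) auto
  finally show ?thesis .
qed

definition bin :: "real \<Rightarrow> int^'d \<Rightarrow> (real^'d) set" where
  "bin h k = {x. bin_index h x = k}"

lemma bin_count_eq_card_bin: "bin_count h n X k = card {j\<in>{..<n}. X j \<in> bin h k}"
  by (simp add: bin_count_def bin_def)

lemma bin_index_bounds:
  assumes "0 < h"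
  shows "real_of_int (bin_index h x $ i) * h \<le> x $ i" "x $ i < real_of_int (bin_index h x $ i) * h + h"
proof -
  have "real_of_int (bin_index h x $ i) \<le> x $ i / h" "x $ i / h < real_of_int (bin_index h x $ i) + 1"
    by (simp_all add: bin_index_def)
  then show "real_of_int (bin_index h x $ i) * h \<le> x $ i" "x $ i < real_of_int (bin_index h x $ i) * h + h"
    using assms by (simp_all add: field_simps)
qed

lemma mem_bin_iff:
  assumes "0 < h"
  shows "x \<in> bin h k \<longleftrightarrow> (\<forall>i. real_of_int (k $ i) * h \<le> x $ i \<and> x $ i < real_of_int (k $ i) * h + h)"
proof
  show "x \<in> bin h k \<Longrightarrow> \<forall>i. real_of_int (k $ i) * h \<le> x $ i \<and> x $ i < real_of_int (k $ i) * h + h"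
    using bin_index_bounds[OF assms] by (auto simp: bin_def)
next
  assume bounds: "\<forall>i. real_of_int (k $ i) * h \<le> x $ i \<and> x $ i < real_of_int (k $ i) * h + h"
  have "\<lfloor>x $ i / h\<rfloor> = k $ i" for i
  proof -
    have "real_of_int (k $ i) \<le> x $ i / h" "x $ i / h < real_of_int (k $ i) + 1"
      using bounds assms by (auto simp: field_simps)
    then show ?thesis by linarith
  qed
  then show "x \<in> bin h k" by (auto simp: bin_def bin_index_def vec_eq_iff)
qed

lemma measurable_bin_index [measurable]: "bin_index h \<in> borel \<rightarrow>\<^sub>M count_space UNIV"
  unfolding measurable_count_space_eq2_countable
proof (intro conjI ballI)
  fix k :: "int^'d"
  have "bin_index h -` {k} \<inter> space borel = {x :: real^'d. \<forall>i. \<lfloor>x $ i / h\<rfloor> = k $ i}"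
    by (auto simp: bin_index_def vec_eq_iff)
  then show "bin_index h -` {k} \<inter> space borel \<in> sets borel"
    by simp
qed simp

lemma sets_bin [measurable]: "bin h k \<in> sets borel"
  unfolding bin_def by measurable

lemma emeasure_bin:
  assumes "0 < h"
  shows "emeasure lborel (bin h k :: (real^'d) set) = ennreal (h ^ CARD('d))"
proof -
  let ?a = "bin_corner h k :: real^'d" and ?b = "(\<chi> i. real_of_int (k $ i) * h + h) :: real^'d"
  have box_sub: "box ?a ?b \<subseteq> bin h k" and sub_cbox: "bin h k \<subseteq> cbox ?a ?b"
    using assms by (auto simp: mem_bin_iff mem_box_cart bin_corner_def less_imp_le)
  have "emeasure lborel (box ?a ?b) = emeasure lborel (cbox ?a ?b)"
    by (simp only: emeasure_lborel_box_eq emeasure_lborel_cbox_eq)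
  moreover have "emeasure lborel (box ?a ?b) \<le> emeasure lborel (bin h k)"
    by (rule emeasure_mono[OF box_sub]) simp
  moreover have "emeasure lborel (bin h k) \<le> emeasure lborel (cbox ?a ?b)"
    by (rule emeasure_mono[OF sub_cbox]) simp
  ultimately have "emeasure lborel (bin h k) = emeasure lborel (cbox ?a ?b)"
    by (auto intro: antisym)
  also have "\<dots> = ennreal (measure lborel (cbox ?a ?b))"
    using emeasure_lborel_cbox_finite[of ?a ?b] by (simp add: emeasure_eq_ennreal_measure less_top)
  also have "measure lborel (cbox ?a ?b) = h ^ CARD('d)"
  proof -
    have "?a \<in> cbox ?a ?b" using assms by (simp add: mem_box_cart bin_corner_def)
    then show ?thesis by (subst content_cbox_cart) (auto simp: bin_corner_def)
  qed
  finally show ?thesis .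
qed

lemma measure_bin: "0 < h \<Longrightarrow> measure lborel (bin h k :: (real^'d) set) = h ^ CARD('d)"
  by (simp add: measure_def emeasure_bin)

lemma infnorm_bin_corner_le:
  assumes "0 < h"
  shows "infnorm (bin_corner h k - x) \<le> (lattice_dist k (bin_index h x) + 1) * h"
  unfolding infnorm_le_iff
proof
  fix i
  let ?l = "bin_index h x"
  have "\<bar>real_of_int (k $ i) * h - real_of_int (?l $ i) * h\<bar> = \<bar>real_of_int (k $ i - ?l $ i)\<bar> * h"
    using assms by (simp add: abs_mult left_diff_distrib[symmetric])
  also have "\<dots> \<le> lattice_dist k ?l * h"
    using assms abs_le_lattice_dist by (intro mult_right_mono) auto
  finally show "\<bar>(bin_corner h k - x) $ i\<bar> \<le> (lattice_dist k ?l + 1) * h"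
    using bin_index_bounds[OF assms, of x i] by (simp add: bin_corner_def algebra_simps abs_le_iff)
qed

lemma lattice_dist_bin_index_le:
  assumes "0 < h"
  shows "(lattice_dist (bin_index h x) (bin_index h y) - 1) * h \<le> infnorm (x - y)"
proof -
  let ?k = "bin_index h x" and ?l = "bin_index h y"
  have "\<bar>real_of_int (?k $ i - ?l $ i)\<bar> \<le> infnorm (x - y) / h + 1" for i
  proof -
    have "\<bar>real_of_int (?k $ i - ?l $ i)\<bar> * h = \<bar>real_of_int (?k $ i) * h - real_of_int (?l $ i) * h\<bar>"
      using assms by (simp add: abs_mult left_diff_distrib[symmetric])
    also have "\<dots> \<le> \<bar>x $ i - y $ i\<bar> + h"
      using bin_index_bounds[OF assms, of x i] bin_index_bounds[OF assms, of y i] by (smt (verit))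
    also have "\<dots> \<le> infnorm (x - y) + h"
      using component_le_infnorm_cart[of "x - y" i] by simp
    finally show ?thesis using assms by (simp add: field_simps)
  qed
  then have "lattice_dist ?k ?l \<le> infnorm (x - y) / h + 1"
    by (simp add: lattice_dist_le_iff)
  then show ?thesis using assms by (simp add: field_simps)
qed

lemma infnorm_le_of_bin_index_eq:
  assumes "0 < h" "bin_index h x = bin_index h y"
  shows "infnorm (x - y) \<le> h"
  unfolding infnorm_le_iff
proof
  fix i
  show "\<bar>(x - y) $ i\<bar> \<le> h"
    using bin_index_bounds[OF assms(1), of x i] bin_index_bounds[OF assms(1), of y i] assms(2)
    by (auto simp: abs_le_iff)
qed

lemma measure_density_le_const:
  fixes f :: "'a \<Rightarrow> real"
  assumes [measurable]: "f \<in> borel_measurable M" "S \<in> sets M"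
    and "emeasure M S < \<infinity>" "0 \<le> c" "\<And>x. x \<in> S \<Longrightarrow> f x \<le> c"
  shows "measure (density M (\<lambda>x. ennreal (f x))) S \<le> c * measure M S"
proof -
  have "emeasure (density M (\<lambda>x. ennreal (f x))) S = (\<integral>\<^sup>+ x. ennreal (f x) * indicator S x \<partial>M)"
    by (rule emeasure_density) measurable
  also have "\<dots> \<le> (\<integral>\<^sup>+ x. ennreal c * indicator S x \<partial>M)"
    using assms(5) by (intro nn_integral_mono) (auto simp: indicator_def ennreal_leI)
  also have "\<dots> = ennreal (c * measure M S)"
    using assms(3,4) by (simp add: nn_integral_cmult_indicator emeasure_eq_ennreal_measure less_top ennreal_mult)
  finally show ?thesis
    unfolding measure_def[of _ S] using assms(4) by (intro enn2real_leI) auto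
qed

lemma measure_density_ge_const:
  fixes f :: "'a \<Rightarrow> real"
  assumes [measurable]: "f \<in> borel_measurable M" "S \<in> sets M"
    and finite: "emeasure (density M (\<lambda>x. ennreal (f x))) S < \<infinity>" and ge: "\<And>x. x \<in> S \<Longrightarrow> c \<le> f x"
  shows "c * measure M S \<le> measure (density M (\<lambda>x. ennreal (f x))) S"
proof (cases "0 \<le> c")
  case True
  have "ennreal (c * measure M S) \<le> ennreal c * emeasure M S"
    using True by (cases "emeasure M S = \<infinity>") (auto simp: measure_def ennreal_mult ennreal_enn2real_if)
  also have "\<dots> = (\<integral>\<^sup>+ x. ennreal c * indicator S x \<partial>M)"
    by (simp add: nn_integral_cmult_indicator)
  also have "\<dots> \<le> (\<integral>\<^sup>+ x. ennreal (f x) * indicator S x \<partial>M)"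
    using ge by (intro nn_integral_mono) (auto simp: indicator_def ennreal_leI)
  also have "\<dots> = emeasure (density M (\<lambda>x. ennreal (f x))) S"
    by (rule emeasure_density[symmetric]) measurable
  finally have "enn2real (ennreal (c * measure M S)) \<le> measure (density M (\<lambda>x. ennreal (f x))) S"
    unfolding measure_def[of "density _ _"] using finite by (intro enn2real_mono) (simp_all add: less_top)
  then show ?thesis using True by simp
next
  case False
  then have "c * measure M S \<le> 0" by (simp add: mult_nonpos_nonneg)
  then show ?thesis by (meson measure_nonneg order_trans)
qed

section \<open>The mode hunting estimator\<close>

lemma sets_mode_hunting_event:
  fixes M :: "(real^'d) measure" and n :: nat and P :: "real^'d \<Rightarrow> bool"
  assumes "sets M = sets borel"
  shows "{X \<in> space (PiM {..<n} (\<lambda>_. M)). \<forall>xh \<in> mode_hunting_outputs h n X. P xh}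
           \<in> sets (PiM {..<n} (\<lambda>_. M))"
proof -
  have [measurable]: "(\<lambda>X. bin_index h (X i)) \<in> PiM {..<n} (\<lambda>_. M) \<rightarrow>\<^sub>M count_space UNIV"
    if "i < n" for i
  proof -
    have "(\<lambda>X. X i) \<in> PiM {..<n} (\<lambda>_. M) \<rightarrow>\<^sub>M borel"
      using that measurable_cong_sets[OF refl assms] by (auto intro: measurable_component_singleton)
    then show ?thesis by measurable
  qed
  have "{X \<in> space (PiM {..<n} (\<lambda>_. M)). \<forall>xh \<in> mode_hunting_outputs h n X. P xh} =
    {X \<in> space (PiM {..<n} (\<lambda>_. M)). \<forall>i\<in>{..<n}.
       (\<forall>j\<in>{..<n}. bin_count h n X (bin_index h (X j)) \<le> bin_count h n X (bin_index h (X i)))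
         \<longrightarrow> P (bin_corner h (bin_index h (X i)))}"
    unfolding mode_hunting_outputs_def by auto
  also have "\<dots> \<in> sets (PiM {..<n} (\<lambda>_. M))"
    unfolding bin_count_def by measurable
  finally show ?thesis .
qed

lemma mode_hunting_output_far:
  assumes "0 < h" and "xh \<in> mode_hunting_outputs h n X" and "(a + 1) * h < infnorm (xh - x)"
  obtains i where "i < n" "a < lattice_dist (bin_index h (X i)) (bin_index h x)"
    "bin_count h n X (bin_index h x) \<le> bin_count h n X (bin_index h (X i))"
proof -
  obtain i where i: "i < n" "xh = bin_corner h (bin_index h (X i))"
    and max: "\<And>j. j < n \<Longrightarrow> bin_count h n X (bin_index h (X j)) \<le> bin_count h n X (bin_index h (X i))"
    using assms(2) unfolding mode_hunting_outputs_def by auto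
  let ?k = "bin_index h (X i)"
  have "(a + 1) * h < (lattice_dist ?k (bin_index h x) + 1) * h"
    using assms(3) infnorm_bin_corner_le[OF assms(1), of ?k x] i(2) by simp
  then have "a < lattice_dist ?k (bin_index h x)" using assms(1) by simp
  moreover have "bin_count h n X (bin_index h x) \<le> bin_count h n X ?k"
  proof (cases "\<exists>j<n. bin_index h (X j) = bin_index h x")
    case True
    then obtain j where "j < n" "bin_index h (X j) = bin_index h x" by blast
    then show ?thesis using max[of j] by simp
  next
    case False
    then have "bin_count h n X (bin_index h x) = 0" by (auto simp: bin_count_def)
    then show ?thesis by simp
  qed
  ultimately show ?thesis using that i(1) by blast
qed

section \<open>Densities with a sharp mode\<close>

locale sharp_mode_density =
  fixes f :: "real^'d \<Rightarrow> real" and x0 :: "real^'d" and c0 C0 h0 \<beta> R :: real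
  assumes f_borel [measurable]: "f \<in> borel_measurable borel"
    and f_nonneg: "\<And>x. 0 \<le> f x"
    and f_integral: "(\<integral>\<^sup>+ x. ennreal (f x) \<partial>lborel) = 1"
    and f_le_mode: "\<And>x. f x \<le> f x0"
    and f_support: "\<And>x. R < infnorm (x - x0) \<Longrightarrow> f x = 0"
    and constants: "0 < c0" "0 < C0" "0 < h0" "0 < \<beta>" "h0 \<le> R"
    and near: "\<And>x. infnorm (x - x0) \<le> h0 \<Longrightarrow>
                 f x0 - C0 * infnorm (x - x0) powr \<beta> \<le> f x \<and> f x \<le> f x0 - c0 * infnorm (x - x0) powr \<beta>"
    and far: "\<And>x. h0 \<le> infnorm (x - x0) \<Longrightarrow> f x \<le> f x0 - c0 * h0 powr \<beta>"
begin

definition \<mu> :: "(real^'d) measure" where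
  "\<mu> = density lborel (\<lambda>x. ennreal (f x))"

lemma sets_\<mu> [simp]: "sets \<mu> = sets borel"
  by (simp add: \<mu>_def)

lemma prob_space_\<mu>: "prob_space \<mu>"
proof
  have "emeasure \<mu> UNIV = (\<integral>\<^sup>+ x. ennreal (f x) * indicator UNIV x \<partial>lborel)"
    unfolding \<mu>_def by (intro emeasure_density) auto
  then show "emeasure \<mu> (space \<mu>) = 1" using f_integral by (simp add: \<mu>_def)
qed

sublocale \<mu>: prob_space \<mu>
  by (rule prob_space_\<mu>)

abbreviation samples :: "nat \<Rightarrow> (nat \<Rightarrow> real^'d) measure" where
  "samples n \<equiv> PiM {..<n} (\<lambda>_. \<mu>)"

lemma mode_value_pos: "0 < f x0"
proof (rule ccontr)
  assume "\<not> 0 < f x0"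
  then have "f x = 0" for x using f_le_mode[of x] f_nonneg[of x] by linarith
  then show False using f_integral by simp
qed

lemma AE_support: "AE x in \<mu>. infnorm (x - x0) \<le> R"
proof -
  have "0 < f x \<Longrightarrow> infnorm (x - x0) \<le> R" for x
    using f_support[of x] by force
  then show ?thesis
    unfolding \<mu>_def by (subst AE_density) (auto intro!: AE_I2)
qed

lemma f_le_mode_minus:
  assumes "0 \<le> r" "r \<le> h0" "r \<le> infnorm (x - x0)"
  shows "f x \<le> f x0 - c0 * r powr \<beta>"
proof (cases "infnorm (x - x0) \<le> h0")
  case True
  have "r powr \<beta> \<le> infnorm (x - x0) powr \<beta>" using assms constants by (intro powr_mono2) auto
  then show ?thesis using near[OF True] constants by (smt (verit) mult_left_mono)
next
  case False
  have "r powr \<beta> \<le> h0 powr \<beta>" using assms constants by (intro powr_mono2) auto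
  then show ?thesis using far[of x] False constants by (smt (verit) mult_left_mono)
qed

lemma f_ge_mode_minus:
  assumes "infnorm (x - x0) \<le> r" "r \<le> h0"
  shows "f x0 - C0 * r powr \<beta> \<le> f x"
proof -
  have "infnorm (x - x0) powr \<beta> \<le> r powr \<beta>"
    using assms constants by (intro powr_mono2) (auto simp: infnorm_pos_le)
  then show ?thesis using near[of x] assms constants by (smt (verit) mult_left_mono)
qed

lemma measure_bin_le:
  assumes "0 < h"
  shows "measure \<mu> (bin h k) \<le> f x0 * h ^ CARD('d)"
proof -
  have "measure \<mu> (bin h k) \<le> f x0 * measure lborel (bin h k)"
    unfolding \<mu>_def using f_le_mode mode_value_pos emeasure_bin[OF assms, of k]
    by (intro measure_density_le_const) auto
  then show ?thesis by (simp add: measure_bin[OF assms])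
qed

lemma measure_mode_bin_ge:
  assumes "0 < h" "h \<le> h0"
  shows "(f x0 - C0 * h powr \<beta>) * h ^ CARD('d) \<le> measure \<mu> (bin h (bin_index h x0))"
proof -
  have "f x0 - C0 * h powr \<beta> \<le> f x" if "x \<in> bin h (bin_index h x0)" for x
    using that infnorm_le_of_bin_index_eq[OF assms(1)] assms(2)
    by (intro f_ge_mode_minus) (auto simp: bin_def)
  then have "(f x0 - C0 * h powr \<beta>) * measure lborel (bin h (bin_index h x0))
               \<le> measure \<mu> (bin h (bin_index h x0))"
    using \<mu>.emeasure_finite[of "bin h (bin_index h x0)"]
    unfolding \<mu>_def by (intro measure_density_ge_const) (auto simp: less_top)
  then show ?thesis by (simp add: measure_bin[OF assms(1)])
qed

definition decay :: real where
  "decay = c0 * (h0 / (2 * R)) powr \<beta>"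

text \<open>A bin at lattice distance \<open>m\<close> from the mode bin lies at distance at least \<open>(m - 1) h\<close>
  from \<open>x0\<close>; when it meets the support this is at most \<open>R\<close>, so rescaling by \<open>h0 / R\<close> brings it into
  the range \<open>[0, h0]\<close> of the lower bound on the decay of \<open>f\<close>.\<close>
lemma measure_far_bin_le:
  fixes k :: "int^'d" and h :: real
  defines "m \<equiv> lattice_dist k (bin_index h x0)"
  assumes "0 < h" "2 \<le> m" "(m - 1) * h \<le> R"
  shows "measure \<mu> (bin h k) \<le> (f x0 - decay * m powr \<beta> * h powr \<beta>) * h ^ CARD('d)"
proof -
  define r where "r = h0 / (2 * R) * (m * h)"
  have "0 < R" using constants by linarith
  have "m * h / 2 \<le> (m - 1) * h" using assms by (simp add: field_simps)
  have "r = h0 / R * (m * h / 2)" by (simp add: r_def)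
  also have "\<dots> \<le> 1 * (m * h / 2)"
    using assms constants \<open>0 < R\<close> by (intro mult_right_mono) auto
  finally have r_le: "r \<le> (m - 1) * h"
    using \<open>m * h / 2 \<le> (m - 1) * h\<close> by simp
  have "m * h / 2 / R \<le> 1"
    using \<open>m * h / 2 \<le> (m - 1) * h\<close> assms(4) \<open>0 < R\<close> by simp
  have "r = h0 * (m * h / 2 / R)" by (simp add: r_def)
  also have "\<dots> \<le> h0 * 1"
    using constants \<open>m * h / 2 / R \<le> 1\<close> by (intro mult_left_mono) auto
  finally have r_le_h0: "r \<le> h0" by simp
  have "r powr \<beta> = (h0 / (2 * R)) powr \<beta> * (m powr \<beta> * h powr \<beta>)"
    unfolding r_def using assms constants \<open>0 < R\<close> by (simp add: powr_mult del: times_divide_eq_left)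
  then have r_powr: "c0 * r powr \<beta> = decay * m powr \<beta> * h powr \<beta>"
    by (simp add: decay_def)
  have bound: "f x \<le> f x0 - decay * m powr \<beta> * h powr \<beta>" if "x \<in> bin h k" for x
  proof -
    have "(m - 1) * h \<le> infnorm (x - x0)"
      using that lattice_dist_bin_index_le[OF assms(2), of x x0] by (simp add: m_def bin_def)
    then show ?thesis
      using f_le_mode_minus[of r x] r_le r_le_h0 r_powr assms constants \<open>0 < R\<close> by (simp add: r_def)
  qed
  have "bin_corner h k \<in> bin h k" using assms(2) by (simp add: mem_bin_iff bin_corner_def)
  then have "0 \<le> f x0 - decay * m powr \<beta> * h powr \<beta>"
    using bound f_nonneg order_trans by blast
  then show ?thesis
    unfolding \<mu>_def
    using measure_density_le_const[of f lborel "bin h k"] bound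
      emeasure_bin[OF assms(2), of k] measure_bin[OF assms(2), of k]
    by simp
qed

definition threshold :: real where
  "threshold = max (R / h0 + 2) ((2 * C0 / decay) powr (1 / \<beta>))"

lemma decay_pos: "0 < decay"
  using constants by (simp add: decay_def)

lemma ge_threshold:
  assumes "threshold \<le> m"
  shows "2 \<le> m" "R < (m - 1) * h0" "2 * C0 \<le> decay * m powr \<beta>"
proof -
  have "R / h0 + 2 \<le> m" using assms by (simp add: threshold_def)
  moreover have "0 \<le> R / h0" using constants by simp
  ultimately show "2 \<le> m" by linarith
  from \<open>R / h0 + 2 \<le> m\<close> show "R < (m - 1) * h0"
    using constants by (simp add: field_simps)
  have "(2 * C0 / decay) powr (1 / \<beta>) \<le> m" using assms by (simp add: threshold_def)
  then have "((2 * C0 / decay) powr (1 / \<beta>)) powr \<beta> \<le> m powr \<beta>"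
    using constants by (intro powr_mono2) auto
  then have "2 * C0 / decay \<le> m powr \<beta>"
    using constants decay_pos by (simp add: powr_powr)
  then show "2 * C0 \<le> decay * m powr \<beta>"
    using decay_pos by (simp add: field_simps)
qed

lemma bin_mass_gap:
  fixes k :: "int^'d" and h :: real
  defines "m \<equiv> lattice_dist k (bin_index h x0)"
  assumes "0 < h" "threshold \<le> m" "(m - 1) * h \<le> R"
  shows "decay / 2 * m powr \<beta> * h powr \<beta> * h ^ CARD('d)
           \<le> measure \<mu> (bin h (bin_index h x0)) - measure \<mu> (bin h k)"
proof -
  note m = ge_threshold[OF assms(3)]
  have "(m - 1) * h < (m - 1) * h0" using m(2) assms(4) by linarith
  then have "h \<le> h0" using m(1) by simp
  have "decay / 2 * m powr \<beta> \<le> decay * m powr \<beta> - C0" using m(3) by linarith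
  then have "decay / 2 * m powr \<beta> * h powr \<beta> * h ^ CARD('d)
               \<le> (decay * m powr \<beta> - C0) * h powr \<beta> * h ^ CARD('d)"
    using assms(2) by (intro mult_right_mono) auto
  also have "\<dots> = (f x0 - C0 * h powr \<beta>) * h ^ CARD('d)
                   - (f x0 - decay * m powr \<beta> * h powr \<beta>) * h ^ CARD('d)"
    by (simp add: algebra_simps)
  also have "\<dots> \<le> measure \<mu> (bin h (bin_index h x0)) - measure \<mu> (bin h k)"
  proof -
    have "measure \<mu> (bin h k) \<le> (f x0 - decay * m powr \<beta> * h powr \<beta>) * h ^ CARD('d)"
      using measure_far_bin_le[of h k] assms(2,4) m(1) by (simp add: m_def)
    then show ?thesis using measure_mode_bin_ge[OF assms(2) \<open>h \<le> h0\<close>] by linarith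
  qed
  finally show ?thesis .
qed

definition rate :: real where
  "rate = (decay / 2)\<^sup>2 / (8 * f x0)"

lemma rate_pos: "0 < rate"
  using decay_pos mode_value_pos by (simp add: rate_def)

lemma chernoff_exponent_far_bin_ge:
  fixes k :: "int^'d" and h :: real
  defines "m \<equiv> lattice_dist k (bin_index h x0)"
    and "q \<equiv> measure \<mu> (bin h (bin_index h x0))" and "p \<equiv> measure \<mu> (bin h k)"
  assumes "0 < h" "threshold \<le> m" "(m - 1) * h \<le> R"
  shows "p < q" "rate * h powr (CARD('d) + 2 * \<beta>) * m powr (2 * \<beta>) \<le> (q - p)\<^sup>2 / (8 * q)"
proof -
  define H where "H = h ^ CARD('d)"
  define D where "D = decay / 2 * m powr \<beta> * h powr \<beta> * H"
  have "0 < H" using assms(4) by (simp add: H_def)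
  have "2 \<le> m" using ge_threshold[OF assms(5)] by simp
  then have "0 < D" using decay_pos assms(4) \<open>0 < H\<close> by (simp add: D_def)
  have gap: "D \<le> q - p"
    using bin_mass_gap[OF assms(4-6)[unfolded m_def]] by (simp add: D_def H_def p_def q_def m_def)
  then show "p < q" using \<open>0 < D\<close> by linarith
  have "0 < q" using gap \<open>0 < D\<close> measure_nonneg[of \<mu> "bin h k"] unfolding p_def by linarith
  have "q \<le> f x0 * H" using measure_bin_le[OF assms(4)] by (simp add: q_def H_def)
  have powr_double: "x powr (2 * \<beta>) = (x powr \<beta>)\<^sup>2" for x :: real
    by (metis power2_eq_square powr_add mult_2)
  have "h powr (CARD('d) + 2 * \<beta>) = H * h powr (2 * \<beta>)"
    using assms(4) by (simp add: H_def powr_add powr_realpow)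
  then have "rate * h powr (CARD('d) + 2 * \<beta>) * m powr (2 * \<beta>) = D\<^sup>2 / (8 * (f x0 * H))"
    using \<open>0 < H\<close> mode_value_pos unfolding powr_double
    by (simp add: rate_def D_def power_mult_distrib power2_eq_square field_simps)
  also have "\<dots> \<le> (q - p)\<^sup>2 / (8 * q)"
    using gap \<open>0 < D\<close> \<open>0 < q\<close> \<open>q \<le> f x0 * H\<close> by (intro frac_le power_mono) auto
  finally show "rate * h powr (CARD('d) + 2 * \<beta>) * m powr (2 * \<beta>) \<le> (q - p)\<^sup>2 / (8 * q)" .
qed

lemma prob_far_bin_beats_mode_bin:
  fixes k :: "int^'d" and h :: real and n :: nat
  defines "m \<equiv> lattice_dist k (bin_index h x0)"
  assumes "0 < h" "threshold \<le> m" "(m - 1) * h \<le> R"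
  shows "measure (samples n)
      {X \<in> space (samples n). bin_count h n X (bin_index h x0) \<le> bin_count h n X k}
    \<le> exp (- rate * (real n * h powr (CARD('d) + 2 * \<beta>)) * m powr (2 * \<beta>))"
proof -
  define q where "q = measure \<mu> (bin h (bin_index h x0))"
  define p where "p = measure \<mu> (bin h k)"
  note exponent = chernoff_exponent_far_bin_ge[OF assms(2-4)[unfolded m_def], folded m_def p_def q_def]
  have "k \<noteq> bin_index h x0" using ge_threshold[OF assms(3)] by (auto simp: m_def lattice_dist_self)
  then have disjoint: "bin h k \<inter> bin h (bin_index h x0) = {}" by (auto simp: bin_def)
  have "measure (samples n)
      {X \<in> space (samples n). bin_count h n X (bin_index h x0) \<le> bin_count h n X k}
    \<le> exp (- real n * (q - p)\<^sup>2 / (8 * q))"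
    unfolding bin_count_eq_card_bin p_def q_def
    using exponent(1) by (intro prob_count_le_count[OF prob_space_\<mu> _ _ disjoint]) (simp_all add: p_def q_def)
  also have "\<dots> \<le> exp (- rate * (real n * h powr (CARD('d) + 2 * \<beta>)) * m powr (2 * \<beta>))"
    using mult_left_mono[OF exponent(2), of "real n"] by (simp add: algebra_simps)
  finally show ?thesis .
qed

definition far_bins :: "real \<Rightarrow> real \<Rightarrow> (int^'d) set" where
  "far_bins h a = {k. a < lattice_dist k (bin_index h x0) \<and> (lattice_dist k (bin_index h x0) - 1) * h \<le> R}"

lemma finite_far_bins: "0 < h \<Longrightarrow> finite (far_bins h a)"
  by (rule finite_subset[OF _ finite_lattice_ball[of "bin_index h x0" "R / h + 1"]])
    (auto simp: far_bins_def field_simps)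

text \<open>Up to a null set all samples lie in the support, so a sample bin beating the mode bin
  is one of the finitely many \<open>far_bins\<close>.\<close>
lemma prob_mode_hunting_close_ge:
  fixes h a :: real and n :: nat
  assumes "0 < h" "threshold \<le> a"
  shows "1 - (\<Sum>k\<in>far_bins h a. exp (- rate * (real n * h powr (CARD('d) + 2 * \<beta>)) * lattice_dist k (bin_index h x0) powr (2 * \<beta>)))
    \<le> measure (samples n)
        {X \<in> space (samples n). \<forall>xh \<in> mode_hunting_outputs h n X. infnorm (xh - x0) \<le> (a + 1) * h}"
proof -
  let ?k0 = "bin_index h x0"
  interpret sample: prob_space "samples n" by (intro prob_space_PiM prob_space_\<mu>)
  define close where "close = {X \<in> space (samples n). \<forall>xh \<in> mode_hunting_outputs h n X. infnorm (xh - x0) \<le> (a + 1) * h}"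
  define beats where "beats k = {X \<in> space (samples n). bin_count h n X ?k0 \<le> bin_count h n X k}" for k
  have close_sets: "close \<in> sets (samples n)" unfolding close_def by (rule sets_mode_hunting_event) simp
  have beats_sets: "beats k \<in> sets (samples n)" for k
    unfolding beats_def bin_count_eq_card_bin by (intro sets_count_le_count) simp_all
  have "AE X in samples n. \<forall>j\<in>{..<n}. infnorm (X j - x0) \<le> R"
    using AE_support by (intro eventually_ball_finite ballI AE_PiM_component prob_space_\<mu>) auto
  then obtain N where N: "N \<in> null_sets (samples n)" "{X \<in> space (samples n). \<not> (\<forall>j\<in>{..<n}. infnorm (X j - x0) \<le> R)} \<subseteq> N"
    by (auto elim!: AE_E intro: null_setsI)
  have "space (samples n) - close \<subseteq> (\<Union>k\<in>far_bins h a. beats k) \<union> N"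
  proof
    fix X assume X: "X \<in> space (samples n) - close"
    then obtain xh where "xh \<in> mode_hunting_outputs h n X" "(a + 1) * h < infnorm (xh - x0)"
      by (auto simp: close_def not_le)
    then obtain i where i: "i < n" "a < lattice_dist (bin_index h (X i)) ?k0"
      "bin_count h n X ?k0 \<le> bin_count h n X (bin_index h (X i))"
      using mode_hunting_output_far[OF assms(1)] by blast
    show "X \<in> (\<Union>k\<in>far_bins h a. beats k) \<union> N"
    proof (cases "X \<in> N")
      case False
      then have "infnorm (X i - x0) \<le> R" using N(2) X i(1) by auto
      then have "bin_index h (X i) \<in> far_bins h a"
        using i(2) lattice_dist_bin_index_le[OF assms(1), of "X i" x0] by (auto simp: far_bins_def)
      then show ?thesis using X i(3) by (auto simp: beats_def)
    qed simp
  qed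
  then have "measure (samples n) (space (samples n) - close) \<le> measure (samples n) ((\<Union>k\<in>far_bins h a. beats k) \<union> N)"
    using finite_far_bins[OF assms(1)] beats_sets N(1) by (intro sample.finite_measure_mono) auto
  also have "\<dots> = measure (samples n) (\<Union>k\<in>far_bins h a. beats k)"
    using finite_far_bins[OF assms(1)] beats_sets N(1) by (intro measure_Un_null_set sets.finite_UN) auto
  also have "\<dots> \<le> (\<Sum>k\<in>far_bins h a. measure (samples n) (beats k))"
    using finite_far_bins[OF assms(1)] beats_sets by (intro sample.finite_measure_subadditive_finite) auto
  also have "\<dots> \<le> (\<Sum>k\<in>far_bins h a. exp (- rate * (real n * h powr (CARD('d) + 2 * \<beta>)) * lattice_dist k ?k0 powr (2 * \<beta>)))"
    unfolding beats_def using assms(2)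
    by (intro sum_mono prob_far_bin_beats_mode_bin[OF assms(1)]) (auto simp: far_bins_def)
  finally show ?thesis
    using sample.prob_compl[OF close_sets] by (simp add: close_def)
qed

definition lattice_constant :: real where
  "lattice_constant = (2 * (\<Sum>m. exp (- (rate / 2 / CARD('d)) * real m powr (2 * \<beta>)))) ^ CARD('d)"

definition error_constant :: real where
  "error_constant = max (max 2 (2 / rate)) (max lattice_constant (threshold + 1))"

lemma error_constant_ge:
  "2 \<le> error_constant" "2 / rate \<le> error_constant" "lattice_constant \<le> error_constant"
  "threshold \<le> error_constant - 1"
  by (auto simp: error_constant_def)

lemma prob_mode_hunting_close_large_sample:
  fixes h :: real and n :: nat
  defines "A \<equiv> error_constant" and "t \<equiv> real n * h powr (CARD('d) + 2 * \<beta>)"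
  assumes "0 < h" "1 \<le> t"
  shows "1 - A * exp (- t / A)
           \<le> measure (samples n)
               {X \<in> space (samples n). \<forall>xh \<in> mode_hunting_outputs h n X. infnorm (xh - x0) \<le> A * h}"
proof -
  note A = error_constant_ge[folded A_def]
  have "(\<Sum>k\<in>far_bins h (A - 1). exp (- rate * t * lattice_dist k (bin_index h x0) powr (2 * \<beta>)))
               \<le> exp (- rate * t / 2) * lattice_constant"
    unfolding lattice_constant_def using finite_far_bins[OF assms(3)] assms(4) rate_pos constants A(1)
    by (intro sum_exp_neg_scaled_lattice_dist_powr_le) (auto simp: far_bins_def)
  also have "\<dots> \<le> exp (- rate * t / 2) * A"
    using A(3) by (intro mult_left_mono) auto
  also have "\<dots> \<le> exp (- t / A) * A"
  proof -
    have "1 / A \<le> rate / 2" using A(1,2) rate_pos by (simp add: field_simps)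
    have "t / A = t * (1 / A)" by simp
    also have "\<dots> \<le> t * (rate / 2)" using \<open>1 / A \<le> rate / 2\<close> assms(4) by (intro mult_left_mono) auto
    also have "\<dots> = rate * t / 2" by simp
    finally have "exp (- rate * t / 2) \<le> exp (- t / A)" by simp
    then show ?thesis using A(1) by (intro mult_right_mono) auto
  qed
  finally show ?thesis
    using prob_mode_hunting_close_ge[OF assms(3) A(4), of n] by (simp add: t_def mult.commute)
qed

lemma prob_mode_hunting_close_error_constant:
  fixes h :: real and n :: nat
  defines "A \<equiv> error_constant"
  assumes "0 < h"
  shows "1 - A * exp (- real n * h powr (CARD('d) + 2 * \<beta>) / A)
           \<le> measure (samples n)
               {X \<in> space (samples n). \<forall>xh \<in> mode_hunting_outputs h n X. infnorm (xh - x0) \<le> A * h}"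
proof (cases "1 \<le> real n * h powr (CARD('d) + 2 * \<beta>)")
  case True
  then show ?thesis
    using prob_mode_hunting_close_large_sample[OF assms(2) True] by (simp add: A_def)
next
  case False
  note A = error_constant_ge[folded A_def]
  have "real n * h powr (CARD('d) + 2 * \<beta>) / A \<le> 1 / 2"
    using False A(1) by (simp add: divide_le_eq)
  then have "1 / 2 \<le> exp (- real n * h powr (CARD('d) + 2 * \<beta>) / A)"
    using exp_ge_add_one_self[of "- real n * h powr (CARD('d) + 2 * \<beta>) / A"] by simp
  then have "2 * (1 / 2) \<le> A * exp (- real n * h powr (CARD('d) + 2 * \<beta>) / A)"
    using A(1) by (intro mult_mono) auto
  then show ?thesis by (intro order_trans[OF _ measure_nonneg]) simp
qed

theorem mode_hunting_error_bound:
  "\<exists>A>0. \<forall>(n::nat) h. 0 < h \<longrightarrow>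
     1 - A * exp (- real n * h powr (CARD('d) + 2 * \<beta>) / A)
       \<le> measure (samples n)
           {X \<in> space (samples n). \<forall>xh \<in> mode_hunting_outputs h n X. infnorm (xh - x0) \<le> A * h}"
  using prob_mode_hunting_close_error_constant error_constant_ge(1)
  by (intro exI[of _ error_constant]) auto

end

theorem theorem1:
  fixes f :: "real^'d \<Rightarrow> real" and x0 :: "real^'d"
    and c0 C0 h0 \<beta> :: real
  assumes f_meas: "f \<in> borel_measurable lborel"
    and f_nonneg: "\<And>x. f x \<ge> 0"
    and f_int: "(\<integral>\<^sup>+ x. ennreal (f x) \<partial>lborel) = 1"
    and f_compact_support: "\<exists>K. compact K \<and> (\<forall>x. x \<notin> K \<longrightarrow> f x = 0)"
    and unique_mode: "\<And>x. x \<noteq> x0 \<Longrightarrow> f x < f x0"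
    and params: "0 < c0" "c0 < C0" "0 < h0" "0 < \<beta>"
    and near: "\<And>x. infnorm (x - x0) \<le> h0 \<Longrightarrow>
                 f x0 - C0 * infnorm (x - x0) powr \<beta> \<le> f x \<and>
                 f x \<le> f x0 - c0 * infnorm (x - x0) powr \<beta>"
    and far: "\<And>x. infnorm (x - x0) \<ge> h0 \<Longrightarrow> f x \<le> f x0 - c0 * h0 powr \<beta>"
  shows "\<exists>A>0. \<forall>(n::nat) (h::real). h > 0 \<longrightarrow>
           measure (PiM {..<n} (\<lambda>_. density lborel (\<lambda>x. ennreal (f x))))
             {X \<in> space (PiM {..<n} (\<lambda>_. density lborel (\<lambda>x. ennreal (f x)))).
                \<forall>xh \<in> mode_hunting_outputs h n X. infnorm (xh - x0) \<le> A * h}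
           \<ge> 1 - A * exp (- real n * h powr (real CARD('d) + 2 * \<beta>) / A)"
proof -
  obtain K where K: "compact K" "\<And>x. x \<notin> K \<Longrightarrow> f x = 0"
    using f_compact_support by blast
  obtain b where b: "\<And>x. x \<in> K \<Longrightarrow> norm x \<le> b"
    using compact_imp_bounded[OF K(1)] unfolding bounded_iff by blast
  define R where "R = max (b + norm x0) h0"
  have support: "f x = 0" if "R < infnorm (x - x0)" for x
  proof (rule K(2), rule notI)
    assume "x \<in> K"
    then have "infnorm (x - x0) \<le> b + norm x0"
      using b[of x] infnorm_le_norm[of "x - x0"] norm_triangle_ineq4[of x x0] by linarith
    then show False using that by (simp add: R_def)
  qed
  have "f x \<le> f x0" for x
    using unique_mode[of x] by (cases "x = x0") auto
  then interpret sharp_mode_density f x0 c0 C0 h0 \<beta> R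
    using f_meas f_nonneg f_int support params near far by unfold_locales (auto simp: R_def)
  show ?thesis
    using mode_hunting_error_bound by (simp add: \<mu>_def)
qed

end
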